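(* Let $A \in \mathbb{C}^{m \times p}$, $y \in \mathbb{C}^{m}$, patch-extraction operators $P_1,\dots,P_N \in \{0,1\}^{n \times p}$, and $\nu,\eta,C>0$. Let $$g(W,B,x) = \nu\|Ax-y\|_2^2 + \varphi(W) + \chi(x) + \sum_{j=1}^N \left\{ \|W P_j x - b_j\|_2^2 + \eta^2 \|b_j\|_0\right\},$$ with $\varphi(W)=0$ if $W^HW=I$ and $+\infty$ otherwise, $\chi(x)=0$ if $\|x\|_2\le C$ and $+\infty$ otherwise. For each initialization $(W^0,B^0,x^0)$, the iterate sequence of Algorithm A1 (described in the context) converges to an equivalence class (all members achieving the same objective value) of critical points $(W,B,x)$ of $g$ that are also partial minimizers, satisfying: $x \in \arg\min_{\tilde x} g(W,B,\tilde x)$, $W \in \arg\min_{\tilde W} g(\tilde W,B,x)$, $B\in\arg\min_{\tilde B} g(W,\tilde B,x)$, and $g(W,B+\Delta B,x+\Delta x)\ge g(W,B,x)$ for all $\Delta x\in\mathbb{C}^p$ and all $\Delta B\in\mathbb{C}^{n\times N}$ with $\|\Delta B\|_\infty<\eta/2$.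
   Context: $B=[b_1|\cdots|b_N]\in\mathbb{C}^{n\times N}$; $\|b\|_0$ counts nonzeros; $\|H\|_\infty=\max_{i,j}|H_{ij}|$. A critical point is a generalized stationary point of $g$ ($0$ in the limiting subdifferential). $H_\eta$ is entrywise hard thresholding: $(H_\eta(\alpha))_i=0$ if $|\alpha_i|<\eta$, $=\alpha_i$ if $|\alpha_i|\ge\eta$. Algorithm A1: for $t=1,2,\dots$, with exact computations: (1) with $X=[P_1x^{t-1}|\cdots|P_Nx^{t-1}]$ and full SVD $X(B^{t-1})^H=U\Sigma V^H$, set $W^t=VU^H$; (2) $b_j^t=H_\eta(W^tP_jx^{t-1})$ for all $j$; (3) $x^t$ is a global minimizer of $\nu\|Ax-y\|_2^2+\sum_j\|W^tP_jx-b_j^t\|_2^2$ subject to $\|x\|_2\le C$. *)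

theory Defs
  imports "HOL-Analysis.Analysis"
begin

definition ctrans :: "complex^'b^'a \<Rightarrow> complex^'a^'b" where
  "ctrans M = (\<chi> i j. cnj (M $ j $ i))"

definition unitary_mat :: "complex^'n^'n \<Rightarrow> bool" where
  "unitary_mat W \<longleftrightarrow> ctrans W ** W = mat 1"

definition l0 :: "complex^'n \<Rightarrow> nat" where
  "l0 b = card {i. b $ i \<noteq> 0}"

definition hthr :: "real \<Rightarrow> complex^'n \<Rightarrow> complex^'n" where
  "hthr \<eta> a = (\<chi> i. if cmod (a $ i) < \<eta> then 0 else a $ i)"

definition diag_mat :: "('n \<Rightarrow> real) \<Rightarrow> complex^'n^'n" where
  "diag_mat \<sigma> = (\<chi> i k. if i = k then complex_of_real (\<sigma> i) else 0)"

text \<open>The objective g(W,B,x). The matrix B = [b_1|...|b_N] is stored by columns: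
  B $ j is the column b_j (so B has type complex^'n^'N).\<close>
definition gobj :: "real \<Rightarrow> complex^'p^'m \<Rightarrow> complex^'m \<Rightarrow> ('N \<Rightarrow> complex^'p^'n) \<Rightarrow> real \<Rightarrow> real
    \<Rightarrow> (complex^'n^'n) \<times> (complex^'n^'N::finite) \<times> (complex^'p) \<Rightarrow> ereal" where
  "gobj \<nu> A y P \<eta> C z = (case z of (W, B, x) \<Rightarrow>
     (if unitary_mat W \<and> norm x \<le> C then
        ereal (\<nu> * (norm (A *v x - y))\<^sup>2
               + (\<Sum>j\<in>UNIV. (norm (W *v (P j *v x) - B $ j))\<^sup>2 + \<eta>\<^sup>2 * real (l0 (B $ j))))
      else \<infinity>))"

definition frechet_subdiff :: "('a::real_inner \<Rightarrow> ereal) \<Rightarrow> 'a \<Rightarrow> 'a set" where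
  "frechet_subdiff f z = {v. \<bar>f z\<bar> \<noteq> \<infinity> \<and>
      Liminf (at z) (\<lambda>u. (f u - f z - ereal (v \<bullet> (u - z))) / ereal (norm (u - z))) \<ge> 0}"

definition limiting_subdiff :: "('a::real_inner \<Rightarrow> ereal) \<Rightarrow> 'a \<Rightarrow> 'a set" where
  "limiting_subdiff f z = {v. \<bar>f z\<bar> \<noteq> \<infinity> \<and>
      (\<exists>zk vk. zk \<longlonglongrightarrow> z \<and> (\<lambda>k. f (zk k)) \<longlonglongrightarrow> f z \<and>
               (\<forall>k. vk k \<in> frechet_subdiff f (zk k)) \<and> vk \<longlonglongrightarrow> v)}"

definition critical_point :: "('a::real_inner \<Rightarrow> ereal) \<Rightarrow> 'a \<Rightarrow> bool" where
  "critical_point f z \<longleftrightarrow> 0 \<in> limiting_subdiff f z"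

text \<open>The iterates (W^t,B^t,x^t), t \<ge> 1, of Algorithm A1 (any admissible choice of
  SVD and of global minimizer), from an arbitrary initialization (W^0,B^0,x^0).\<close>
definition A1_iterates :: "real \<Rightarrow> complex^'p^'m \<Rightarrow> complex^'m \<Rightarrow> ('N \<Rightarrow> complex^'p^'n) \<Rightarrow> real \<Rightarrow> real
    \<Rightarrow> (nat \<Rightarrow> complex^'n^'n) \<Rightarrow> (nat \<Rightarrow> complex^'n^'N::finite) \<Rightarrow> (nat \<Rightarrow> complex^'p) \<Rightarrow> bool" where
  "A1_iterates \<nu> A y P \<eta> C Wt Bt xt \<longleftrightarrow>
    (\<forall>t\<ge>1.
      (\<exists>U V \<sigma>. unitary_mat U \<and> unitary_mat V \<and> (\<forall>i. \<sigma> i \<ge> 0) \<and>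
         (\<chi> i k. \<Sum>j\<in>UNIV. (P j *v xt (t - 1)) $ i * cnj (Bt (t - 1) $ j $ k))
            = U ** diag_mat \<sigma> ** ctrans V \<and>
         Wt t = V ** ctrans U) \<and>
      (\<forall>j. Bt t $ j = hthr \<eta> (Wt t *v (P j *v xt (t - 1)))) \<and>
      norm (xt t) \<le> C \<and>
      (\<forall>x'. norm x' \<le> C \<longrightarrow>
         \<nu> * (norm (A *v xt t - y))\<^sup>2 + (\<Sum>j\<in>UNIV. (norm (Wt t *v (P j *v xt t) - Bt t $ j))\<^sup>2)
         \<le> \<nu> * (norm (A *v x' - y))\<^sup>2 + (\<Sum>j\<in>UNIV. (norm (Wt t *v (P j *v x') - Bt t $ j))\<^sup>2)))"

definition good_point :: "real \<Rightarrow> complex^'p^'m \<Rightarrow> complex^'m \<Rightarrow> ('N \<Rightarrow> complex^'p^'n) \<Rightarrow> real \<Rightarrow> real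
    \<Rightarrow> (complex^'n^'n) \<times> (complex^'n^'N::finite) \<times> (complex^'p) \<Rightarrow> bool" where
  "good_point \<nu> A y P \<eta> C z = (case z of (W, B, x) \<Rightarrow>
     critical_point (gobj \<nu> A y P \<eta> C) (W, B, x) \<and>
     (\<forall>x'. gobj \<nu> A y P \<eta> C (W, B, x) \<le> gobj \<nu> A y P \<eta> C (W, B, x')) \<and>
     (\<forall>W'. gobj \<nu> A y P \<eta> C (W, B, x) \<le> gobj \<nu> A y P \<eta> C (W', B, x)) \<and>
     (\<forall>B'. gobj \<nu> A y P \<eta> C (W, B, x) \<le> gobj \<nu> A y P \<eta> C (W, B', x)) \<and>
     (\<forall>dB dx. (\<forall>j i. cmod (dB $ j $ i) < \<eta> / 2) \<longrightarrow>
        gobj \<nu> A y P \<eta> C (W, B, x) \<le> gobj \<nu> A y P \<eta> C (W, B + dB, x + dx)))"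

end

theory Submission
  imports Defs
begin

(* Every step of Algorithm A1 minimizes g exactly in one block: the W-update solves an
   orthogonal Procrustes problem, the B-update is the hard-thresholding minimizer, and the
   x-update minimizes a convex quadratic over the ball, which yields the sufficient decrease
   sum_j |P_j (x^t - x^(t+1))|^2 <= g^t - g^(t+1). So the energies decrease to a limit c, the
   patch increments vanish, and the (bounded) iterates have limit points. At a limit point the
   block optimalities survive, hard thresholding in a closed form allowing ties at modulus eta,
   and the sparsity pattern stabilizes, so the energy there is c. Optimality in B and x plus the
   gap between 0 and entries of modulus >= eta gives local optimality under perturbations of B
   below eta/2; with optimality in W this bounds g from below by a quadratic minorant, so 0 is a
   Frechet subgradient. All limit points thus lie in the set of good points at level c, and by
   boundedness the iterates approach that set. *)

lemma ctrans_nth [simp]: "ctrans M $ i $ j = cnj (M $ j $ i)"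
  by (simp add: ctrans_def)

lemma ctrans_ctrans [simp]: "ctrans (ctrans M) = M"
  by (simp add: vec_eq_iff)

lemma ctrans_matrix_mult: "ctrans (A ** B) = ctrans B ** ctrans A"
  by (simp add: vec_eq_iff matrix_matrix_mult_def mult.commute)

lemma unitary_mat_right_inverse: "unitary_mat U \<Longrightarrow> U ** ctrans U = mat 1"
  unfolding unitary_mat_def by (simp add: matrix_left_right_inverse)

lemma unitary_mat_mult:
  assumes "unitary_mat A" "unitary_mat B"
  shows "unitary_mat (A ** B)"
proof -
  have "ctrans (A ** B) ** (A ** B) = ctrans B ** (ctrans A ** A) ** B"
    by (simp add: ctrans_matrix_mult matrix_mul_assoc)
  also have "\<dots> = mat 1"
    using assms by (simp add: unitary_mat_def matrix_mul_lid)
  finally show ?thesis by (simp add: unitary_mat_def)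
qed

lemma unitary_mat_ctrans: "unitary_mat A \<Longrightarrow> unitary_mat (ctrans A)"
  using unitary_mat_right_inverse by (simp add: unitary_mat_def)

lemma power2_norm_vec_eq_sum:
  fixes v :: "'a::real_normed_vector^'n"
  shows "(norm v)\<^sup>2 = (\<Sum>i\<in>UNIV. (norm (v $ i))\<^sup>2)"
  unfolding norm_vec_def L2_set_def by (simp add: sum_nonneg)

lemma of_real_power2_norm_vec: "complex_of_real ((norm (v::complex^'n))\<^sup>2) = (\<Sum>i\<in>UNIV. v $ i * cnj (v $ i))"
  unfolding power2_norm_vec_eq_sum by (simp only: of_real_sum complex_norm_square)

lemma inner_vec_complex: "inner (a::complex^'n) b = Re (\<Sum>i\<in>UNIV. a $ i * cnj (b $ i))"
  unfolding inner_vec_def by (simp add: inner_complex_def Re_sum)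

lemma power2_norm_add: "(norm (a + b :: 'a::real_inner))\<^sup>2 = (norm a)\<^sup>2 + 2 * inner a b + (norm b)\<^sup>2"
  by (simp add: power2_norm_eq_inner inner_add_left inner_add_right inner_commute)

lemma power2_norm_diff: "(norm (a - b :: 'a::real_inner))\<^sup>2 = (norm a)\<^sup>2 - 2 * inner a b + (norm b)\<^sup>2"
  by (simp add: power2_norm_eq_inner inner_diff_left inner_diff_right inner_commute)

lemma unitary_mat_columns:
  assumes "unitary_mat W"
  shows "(\<Sum>i\<in>UNIV. W $ i $ l * cnj (W $ i $ k)) = (if k = l then 1 else 0)"
proof -
  have "(ctrans W ** W) $ k $ l = (if k = l then 1 else 0)"
    using assms by (simp add: unitary_mat_def mat_def)
  thus ?thesis by (simp add: matrix_matrix_mult_def mult.commute)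
qed

lemma norm_unitary_mult:
  assumes "unitary_mat W"
  shows "norm (W *v v) = norm v"
proof -
  have "complex_of_real ((norm (W *v v))\<^sup>2)
      = (\<Sum>i\<in>UNIV. (\<Sum>k\<in>UNIV. W$i$k * v$k) * cnj (\<Sum>l\<in>UNIV. W$i$l * v$l))"
    unfolding of_real_power2_norm_vec by (simp add: matrix_vector_mult_def)
  also have "\<dots> = (\<Sum>i\<in>UNIV. \<Sum>k\<in>UNIV. \<Sum>l\<in>UNIV. v$k * cnj (v$l) * (W$i$k * cnj (W$i$l)))"
    by (simp add: cnj_sum sum_product mult_ac)
  also have "\<dots> = (\<Sum>k\<in>UNIV. \<Sum>l\<in>UNIV. \<Sum>i\<in>UNIV. v$k * cnj (v$l) * (W$i$k * cnj (W$i$l)))"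
    by (subst sum.swap) (rule sum.cong[OF refl], rule sum.swap)
  also have "\<dots> = (\<Sum>k\<in>UNIV. v$k * cnj (v$k))"
    by (simp add: sum_distrib_left[symmetric] unitary_mat_columns[OF assms] if_distrib sum.delta
        cong: if_cong)
  also have "\<dots> = complex_of_real ((norm v)\<^sup>2)"
    unfolding of_real_power2_norm_vec ..
  finally have "(norm (W *v v))\<^sup>2 = (norm v)\<^sup>2"
    using of_real_eq_iff by blast
  thus ?thesis by (simp add: power2_eq_iff_nonneg)
qed

lemma sum_column_unitary:
  assumes "unitary_mat W"
  shows "(\<Sum>i\<in>UNIV. (cmod (W $ i $ k))\<^sup>2) = 1"
proof -
  have "complex_of_real (\<Sum>i\<in>UNIV. (cmod (W $ i $ k))\<^sup>2) = 1"
    using unitary_mat_columns[OF assms, of k k] by (simp only: of_real_sum complex_norm_square) simp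
  thus ?thesis by (metis of_real_eq_1_iff)
qed

lemma norm_unitary_mat:
  assumes "unitary_mat (W::complex^'n^'n)"
  shows "norm W = sqrt (real CARD('n))"
proof -
  have "(norm W)\<^sup>2 = (\<Sum>i\<in>UNIV. \<Sum>k\<in>UNIV. (cmod (W $ i $ k))\<^sup>2)"
    by (simp add: power2_norm_vec_eq_sum)
  also have "\<dots> = (\<Sum>k\<in>(UNIV::'n set). 1)"
    by (subst sum.swap) (simp add: sum_column_unitary[OF assms])
  finally show ?thesis by (simp add: real_sqrt_unique)
qed

lemma norm_unitary_entry_le:
  assumes "unitary_mat W"
  shows "cmod (W $ i $ k) \<le> 1"
proof -
  have "(cmod (W $ i $ k))\<^sup>2 \<le> (\<Sum>i\<in>UNIV. (cmod (W $ i $ k))\<^sup>2)"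
    by (rule member_le_sum) auto
  hence "(cmod (W $ i $ k))\<^sup>2 \<le> 1\<^sup>2"
    using sum_column_unitary[OF assms] by simp
  thus ?thesis by (rule power2_le_imp_le) simp
qed

lemma norm_matrix_vector_mult_le:
  fixes M :: "complex^'c^'r"
  shows "norm (M *v v) \<le> norm M * norm v"
proof -
  have row: "cmod ((M *v v) $ i) \<le> norm (M $ i) * norm v" for i
  proof -
    have "cmod ((M *v v) $ i) \<le> (\<Sum>k\<in>UNIV. cmod (M $ i $ k) * cmod (v $ k))"
      unfolding matrix_vector_mult_def by (simp add: norm_mult order_trans[OF norm_sum])
    also have "\<dots> \<le> L2_set (\<lambda>k. cmod (M $ i $ k)) UNIV * L2_set (\<lambda>k. cmod (v $ k)) UNIV"
      using L2_set_mult_ineq[of "\<lambda>k. cmod (M $ i $ k)" "\<lambda>k. cmod (v $ k)"] by simp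
    finally show ?thesis by (simp add: norm_vec_def)
  qed
  have "(norm (M *v v))\<^sup>2 \<le> (\<Sum>i\<in>UNIV. (norm (M $ i) * norm v)\<^sup>2)"
    unfolding power2_norm_vec_eq_sum by (intro sum_mono power_mono row) simp
  also have "\<dots> = (norm M * norm v)\<^sup>2"
    by (simp add: power2_norm_vec_eq_sum[of M] power_mult_distrib sum_distrib_right)
  finally show ?thesis by (rule power2_le_imp_le) simp
qed

lemma sum_inner_eq_trace:
  fixes a b :: "'N::finite \<Rightarrow> complex^'n" and W :: "complex^'n^'n"
  shows "(\<Sum>j\<in>UNIV. inner (W *v a j) (b j))
     = Re (trace (W ** (\<chi> i k. \<Sum>j\<in>UNIV. a j $ i * cnj (b j $ k))))"
proof -
  have "(\<Sum>j\<in>UNIV. inner (W *v a j) (b j))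
      = Re (\<Sum>j\<in>UNIV. \<Sum>i\<in>UNIV. \<Sum>k\<in>UNIV. W$i$k * (a j $ k * cnj (b j $ i)))"
    by (simp only: inner_vec_complex matrix_vector_mult_def vec_lambda_beta Re_sum
        sum_distrib_right mult.assoc)
  also have "(\<Sum>j\<in>UNIV. \<Sum>i\<in>UNIV. \<Sum>k\<in>UNIV. W$i$k * (a j $ k * cnj (b j $ i)))
      = (\<Sum>i\<in>UNIV. \<Sum>k\<in>UNIV. \<Sum>j\<in>UNIV. W$i$k * (a j $ k * cnj (b j $ i)))"
    by (subst sum.swap) (rule sum.cong[OF refl], rule sum.swap)
  also have "\<dots> = trace (W ** (\<chi> i k. \<Sum>j\<in>UNIV. a j $ i * cnj (b j $ k)))"
    by (simp add: trace_def matrix_matrix_mult_def sum_distrib_left)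
  finally show ?thesis .
qed

lemma trace_mult_diag_mat:
  "trace (Z ** diag_mat \<sigma>) = (\<Sum>i\<in>UNIV. Z $ i $ i * complex_of_real (\<sigma> i))"
  by (simp add: trace_def matrix_matrix_mult_def diag_mat_def if_distrib sum.delta' cong: if_cong)

text \<open>Orthogonal Procrustes: with \<open>U \<Sigma> V\<^sup>H\<close> an SVD of \<open>\<Sum>\<^sub>j a\<^sub>j b\<^sub>j\<^sup>H\<close>, the unitary
  \<open>V U\<^sup>H\<close> maximizes \<open>Re tr(W \<Sum>\<^sub>j a\<^sub>j b\<^sub>j\<^sup>H) = Re tr((V\<^sup>H W U) \<Sigma>)\<close>, since the diagonal
  entries of the unitary \<open>V\<^sup>H W U\<close> have modulus at most 1.\<close>
lemma procrustes_inner_le: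
  fixes a b :: "'N::finite \<Rightarrow> complex^'n" and W U V :: "complex^'n^'n"
  assumes svd: "(\<chi> i k. \<Sum>j\<in>UNIV. a j $ i * cnj (b j $ k)) = U ** diag_mat \<sigma> ** ctrans V"
    and U: "unitary_mat U" and V: "unitary_mat V" and \<sigma>: "\<forall>i. \<sigma> i \<ge> 0"
    and W: "unitary_mat W"
  shows "(\<Sum>j\<in>UNIV. inner (W *v a j) (b j)) \<le> (\<Sum>j\<in>UNIV. inner ((V ** ctrans U) *v a j) (b j))"
proof -
  have sum_inner: "(\<Sum>j\<in>UNIV. inner (X *v a j) (b j))
     = (\<Sum>i\<in>UNIV. \<sigma> i * Re ((ctrans V ** X ** U) $ i $ i))" for X
  proof -
    have "trace (X ** (U ** diag_mat \<sigma> ** ctrans V)) = trace (ctrans V ** (X ** U ** diag_mat \<sigma>))"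
      by (metis matrix_mul_assoc trace_mul_sym)
    also have "\<dots> = trace ((ctrans V ** X ** U) ** diag_mat \<sigma>)"
      by (simp add: matrix_mul_assoc)
    finally show ?thesis
      unfolding sum_inner_eq_trace svd trace_mult_diag_mat by (simp add: Re_sum mult.commute)
  qed
  have "unitary_mat (ctrans V ** W ** U)"
    by (intro unitary_mat_mult unitary_mat_ctrans V W U)
  hence "Re ((ctrans V ** W ** U) $ i $ i) \<le> 1" for i
    using norm_unitary_entry_le complex_Re_le_cmod order_trans by blast
  hence "(\<Sum>i\<in>UNIV. \<sigma> i * Re ((ctrans V ** W ** U) $ i $ i)) \<le> (\<Sum>i\<in>UNIV. \<sigma> i * 1)"
    using \<sigma> by (intro sum_mono mult_left_mono) auto
  also have "ctrans V ** (V ** ctrans U) ** U = mat 1"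
    using U V by (simp add: unitary_mat_def matrix_mul_assoc flip: matrix_mul_assoc[of V])
  hence "(\<Sum>i\<in>UNIV. \<sigma> i * 1) = (\<Sum>i\<in>UNIV. \<sigma> i * Re ((ctrans V ** (V ** ctrans U) ** U) $ i $ i))"
    by (simp add: mat_def)
  finally show ?thesis unfolding sum_inner .
qed

definition fit :: "real \<Rightarrow> complex^'p^'m \<Rightarrow> complex^'m \<Rightarrow> ('N::finite \<Rightarrow> complex^'p^'n)
    \<Rightarrow> complex^'n^'n \<Rightarrow> complex^'n^'N \<Rightarrow> complex^'p \<Rightarrow> real" where
  "fit \<nu> A y P W B x = \<nu> * (norm (A *v x - y))\<^sup>2 + (\<Sum>j\<in>UNIV. (norm (W *v (P j *v x) - B $ j))\<^sup>2)"

definition sparsity :: "complex^'n^'N::finite \<Rightarrow> real" where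
  "sparsity B = (\<Sum>j\<in>UNIV. real (l0 (B $ j)))"

lemma gobj_eq: "gobj \<nu> A y P \<eta> C (W, B, x) =
   (if unitary_mat W \<and> norm x \<le> C then ereal (fit \<nu> A y P W B x + \<eta>\<^sup>2 * sparsity B) else \<infinity>)"
  by (simp add: gobj_def fit_def sparsity_def sum.distrib sum_distrib_left add.assoc)

lemma fit_nonneg: "0 \<le> \<nu> \<Longrightarrow> 0 \<le> fit \<nu> A y P W B x"
  by (simp add: fit_def sum_nonneg)

lemma sparsity_nonneg: "0 \<le> sparsity B"
  by (simp add: sparsity_def sum_nonneg)

lemma fit_unitary_eq:
  assumes "unitary_mat W"
  shows "fit \<nu> A y P W B x = \<nu> * (norm (A *v x - y))\<^sup>2
     + (\<Sum>j\<in>UNIV. (norm (P j *v x))\<^sup>2 + (norm (B $ j))\<^sup>2) - 2 * (\<Sum>j\<in>UNIV. inner (W *v (P j *v x)) (B $ j))"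
  unfolding fit_def power2_norm_diff norm_unitary_mult[OF assms]
  by (simp add: sum.distrib sum_subtractf sum_distrib_left algebra_simps)

lemma fit_procrustes_le:
  assumes "(\<chi> i k. \<Sum>j\<in>UNIV. (P j *v x) $ i * cnj (B $ j $ k)) = U ** diag_mat \<sigma> ** ctrans V"
    and U: "unitary_mat U" and V: "unitary_mat V" and "\<forall>i. \<sigma> i \<ge> 0" and W: "unitary_mat W"
  shows "fit \<nu> A y P (V ** ctrans U) B x \<le> fit \<nu> A y P W B x"
  using procrustes_inner_le[of "\<lambda>j. P j *v x" "\<lambda>j. B $ j", OF assms]
  unfolding fit_unitary_eq[OF W] fit_unitary_eq[OF unitary_mat_mult[OF V unitary_mat_ctrans[OF U]]]
  by simp

text \<open>A closed relaxation of \<open>b = hthr \<eta> a\<close>: entries with \<open>cmod (a $ i) = \<eta>\<close> may be either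
  kept or zeroed. Unlike the equation it survives limits, and it still characterizes the
  minimizers of \<open>b \<mapsto> \<parallel>a - b\<parallel>\<^sup>2 + \<eta>\<^sup>2 l0 b\<close>.\<close>
definition thresholded :: "real \<Rightarrow> complex^'n \<Rightarrow> complex^'n \<Rightarrow> bool" where
  "thresholded \<eta> a b \<longleftrightarrow>
     (\<forall>i. (b $ i = 0 \<and> cmod (a $ i) \<le> \<eta>) \<or> (b $ i = a $ i \<and> \<eta> \<le> cmod (a $ i)))"

lemma thresholded_hthr: "thresholded \<eta> a (hthr \<eta> a)"
  by (auto simp: thresholded_def hthr_def)

lemma hthr_nth_cases: "hthr \<eta> a $ i = 0 \<or> \<eta> \<le> cmod (hthr \<eta> a $ i)"
  by (simp add: hthr_def)

lemma norm_hthr_le: "norm (hthr \<eta> a) \<le> norm a"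
  by (rule norm_le_componentwise_cart) (simp add: hthr_def)

lemma l0_eq_sum: "real (l0 b) = (\<Sum>i\<in>UNIV. if b $ i \<noteq> 0 then 1 else 0)"
  by (simp add: l0_def sum.If_cases)

lemma hard_threshold_scalar_min:
  assumes "\<eta> > 0" and "(\<beta>0 = 0 \<and> cmod \<alpha> \<le> \<eta>) \<or> (\<beta>0 = \<alpha> \<and> \<eta> \<le> cmod \<alpha>)"
  shows "(cmod (\<alpha> - \<beta>0))\<^sup>2 + \<eta>\<^sup>2 * (if \<beta>0 \<noteq> 0 then 1 else 0)
       \<le> (cmod (\<alpha> - \<beta>))\<^sup>2 + \<eta>\<^sup>2 * (if \<beta> \<noteq> 0 then 1 else 0)"
  using assms(2)
proof
  assume "\<beta>0 = 0 \<and> cmod \<alpha> \<le> \<eta>"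
  moreover have "(cmod \<alpha>)\<^sup>2 \<le> \<eta>\<^sup>2 \<Longrightarrow> (cmod \<alpha>)\<^sup>2 \<le> (cmod (\<alpha> - \<beta>))\<^sup>2 + \<eta>\<^sup>2"
    by (smt (verit) zero_le_power2)
  ultimately show ?thesis by (auto simp: power_mono)
next
  assume "\<beta>0 = \<alpha> \<and> \<eta> \<le> cmod \<alpha>"
  with assms(1) show ?thesis by (auto simp: power_mono)
qed

lemma thresholded_min:
  assumes "\<eta> > 0" "thresholded \<eta> a b0"
  shows "(norm (a - b0))\<^sup>2 + \<eta>\<^sup>2 * real (l0 b0) \<le> (norm (a - b))\<^sup>2 + \<eta>\<^sup>2 * real (l0 b)"
proof -
  have split: "(norm (a - b))\<^sup>2 + \<eta>\<^sup>2 * real (l0 b)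
     = (\<Sum>i\<in>UNIV. (cmod (a$i - b$i))\<^sup>2 + \<eta>\<^sup>2 * (if b $ i \<noteq> 0 then 1 else 0))" for b
    unfolding power2_norm_vec_eq_sum l0_eq_sum by (simp add: sum.distrib sum_distrib_left)
  show ?thesis
    unfolding split
    by (intro sum_mono hard_threshold_scalar_min) (use assms in \<open>auto simp: thresholded_def\<close>)
qed

text \<open>The entries of a thresholded vector are \<open>0\<close> or of modulus at least \<open>\<eta>\<close>, so a
  perturbation of size below \<open>\<eta>/2\<close> can only create nonzeros, each paying \<open>\<eta>\<^sup>2\<close>, which
  dominates the first-order change \<open>2 Re(\<alpha> conj \<delta>) \<le> \<eta>\<^sup>2\<close> of the fit.\<close>
lemma hard_threshold_scalar_local:
  assumes \<eta>: "\<eta> > 0" and h: "(\<beta> = 0 \<and> cmod \<alpha> \<le> \<eta>) \<or> (\<beta> = \<alpha> \<and> \<eta> \<le> cmod \<alpha>)"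
    and \<delta>: "cmod \<delta> < \<eta> / 2"
  shows "\<eta>\<^sup>2 * (if \<beta> \<noteq> 0 then 1 else 0)
      \<le> - 2 * inner (\<alpha> - \<beta>) \<delta> + \<eta>\<^sup>2 * (if \<beta> + \<delta> \<noteq> 0 then 1 else 0)"
  using h
proof
  assume h: "\<beta> = 0 \<and> cmod \<alpha> \<le> \<eta>"
  have "inner \<alpha> \<delta> \<le> cmod \<alpha> * cmod \<delta>" by (rule norm_cauchy_schwarz)
  also have "\<dots> \<le> \<eta> * (\<eta> / 2)" using h \<delta> \<eta> by (intro mult_mono) auto
  finally have "2 * inner \<alpha> \<delta> \<le> \<eta>\<^sup>2" by (simp add: power2_eq_square)
  thus ?thesis using h by simp
next
  assume h: "\<beta> = \<alpha> \<and> \<eta> \<le> cmod \<alpha>"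
  have "\<beta> + \<delta> \<noteq> 0"
  proof
    assume "\<beta> + \<delta> = 0"
    hence "cmod \<beta> = cmod \<delta>" by (metis add_eq_0_iff norm_minus_cancel)
    thus False using h \<delta> \<eta> by simp
  qed
  thus ?thesis using h by simp
qed

lemma thresholded_local_min:
  assumes "\<eta> > 0" "thresholded \<eta> a b" "\<forall>i. cmod (db $ i) < \<eta> / 2"
  shows "\<eta>\<^sup>2 * real (l0 b) \<le> - 2 * inner (a - b) db + \<eta>\<^sup>2 * real (l0 (b + db))"
proof -
  have "\<eta>\<^sup>2 * real (l0 b) = (\<Sum>i\<in>UNIV. \<eta>\<^sup>2 * (if b $ i \<noteq> 0 then 1 else 0))"
    unfolding l0_eq_sum by (simp add: sum_distrib_left)
  also have "\<dots> \<le> (\<Sum>i\<in>UNIV. - 2 * inner (a $ i - b $ i) (db $ i)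
                         + \<eta>\<^sup>2 * (if b $ i + db $ i \<noteq> 0 then 1 else 0))"
    by (intro sum_mono hard_threshold_scalar_local) (use assms in \<open>auto simp: thresholded_def\<close>)
  also have "\<dots> = - 2 * inner (a - b) db + \<eta>\<^sup>2 * real (l0 (b + db))"
    unfolding l0_eq_sum inner_vec_def by (simp add: sum.distrib sum_subtractf sum_distrib_left sum_negf)
  finally show ?thesis .
qed

lemma nonneg_if_nonneg_near_0:
  fixes l q :: real
  assumes "\<And>s. 0 < s \<Longrightarrow> s < 1 \<Longrightarrow> 0 \<le> l + s * q"
  shows "0 \<le> l"
proof -
  have "((\<lambda>s. l + s * q) \<longlongrightarrow> l + 0 * q) (at_right 0)"
    by (intro tendsto_intros)
  moreover have "eventually (\<lambda>s. 0 \<le> l + s * q) (at_right (0::real))"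
    unfolding eventually_at_right_field using assms by (intro exI[of _ 1]) auto
  ultimately show ?thesis
    using tendsto_lowerbound[of _ l "at_right (0::real)"] by simp
qed

lemma fit_add:
  "fit \<nu> A y P W B (x + d) = fit \<nu> A y P W B x
     + (2 * \<nu> * inner (A *v x - y) (A *v d)
        + (\<Sum>j\<in>UNIV. 2 * inner (W *v (P j *v x) - B $ j) (W *v (P j *v d))))
     + (\<nu> * (norm (A *v d))\<^sup>2 + (\<Sum>j\<in>UNIV. (norm (W *v (P j *v d)))\<^sup>2))"
proof -
  have "A *v (x + d) - y = (A *v x - y) + A *v d"
    and "W *v (P j *v (x + d)) - B $ j = (W *v (P j *v x) - B $ j) + W *v (P j *v d)" for j
    by (simp_all add: matrix_vector_right_distrib)
  thus ?thesis
    unfolding fit_def by (simp only: power2_norm_add) (simp add: sum.distrib sum_subtractf algebra_simps)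
qed

lemma matrix_vector_mult_scaleR_complex:
  fixes M :: "complex^'c^'r"
  shows "M *v (s *\<^sub>R v) = s *\<^sub>R (M *v v)"
  by (simp add: vec_eq_iff matrix_vector_mult_def scaleR_sum_right)

text \<open>\<open>x0 + s d\<close> stays in the ball for \<open>0 < s < 1\<close>, and the quadratic part of
  the expansion of \<open>fit\<close> is of order \<open>s\<^sup>2\<close>.\<close>
lemma fit_first_order_nonneg:
  assumes x0: "norm x0 \<le> C" and x1: "norm (x0 + d) \<le> C" and "0 \<le> \<nu>"
    and min: "\<And>x'. norm x' \<le> C \<Longrightarrow> fit \<nu> A y P W B x0 \<le> fit \<nu> A y P W B x'"
  shows "0 \<le> 2 * \<nu> * inner (A *v x0 - y) (A *v d)
             + (\<Sum>j\<in>UNIV. 2 * inner (W *v (P j *v x0) - B $ j) (W *v (P j *v d)))"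
    (is "0 \<le> ?l")
proof (rule nonneg_if_nonneg_near_0)
  let ?q = "\<nu> * (norm (A *v d))\<^sup>2 + (\<Sum>j\<in>UNIV. (norm (W *v (P j *v d)))\<^sup>2)"
  fix s :: real assume s: "0 < s" "s < 1"
  have "norm (x0 + s *\<^sub>R d) = norm ((1 - s) *\<^sub>R x0 + s *\<^sub>R (x0 + d))"
    by (simp add: algebra_simps)
  also have "\<dots> \<le> (1 - s) * norm x0 + s * norm (x0 + d)"
    using s by (smt (verit) norm_scaleR norm_triangle_ineq)
  also have "\<dots> \<le> (1 - s) * C + s * C"
    using s x0 x1 by (intro add_mono mult_left_mono) auto
  finally have "fit \<nu> A y P W B x0 \<le> fit \<nu> A y P W B (x0 + s *\<^sub>R d)"
    by (intro min) (simp add: algebra_simps)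
  also have "\<dots> = fit \<nu> A y P W B x0 + s * (?l + s * ?q)"
    unfolding fit_add using s
    by (simp add: matrix_vector_mult_scaleR_complex power2_eq_square sum_distrib_left algebra_simps)
  finally show "0 \<le> ?l + s * ?q"
    using s by (simp add: zero_le_mult_iff)
qed

lemma fit_sufficient_decrease:
  assumes W: "unitary_mat W" and x0: "norm x0 \<le> C" and x1: "norm x1 \<le> C" and \<nu>: "0 \<le> \<nu>"
    and min: "\<And>x'. norm x' \<le> C \<Longrightarrow> fit \<nu> A y P W B x0 \<le> fit \<nu> A y P W B x'"
  shows "fit \<nu> A y P W B x0 + (\<Sum>j\<in>UNIV. (norm (P j *v (x1 - x0)))\<^sup>2) \<le> fit \<nu> A y P W B x1"
proof -
  have x1_eq: "x1 = x0 + (x1 - x0)" by simp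
  have "0 \<le> 2 * \<nu> * inner (A *v x0 - y) (A *v (x1 - x0))
      + (\<Sum>j\<in>UNIV. 2 * inner (W *v (P j *v x0) - B $ j) (W *v (P j *v (x1 - x0))))"
    using x1 by (intro fit_first_order_nonneg[OF x0 _ \<nu> min]) simp
  moreover have "0 \<le> \<nu> * (norm (A *v (x1 - x0)))\<^sup>2" using \<nu> by simp
  ultimately show ?thesis
    by (subst (2) x1_eq, unfold fit_add norm_unitary_mult[OF W]) simp
qed

lemma gobj_local_min_B_x:
  assumes \<eta>: "\<eta> > 0" and \<nu>: "0 \<le> \<nu>" and W: "unitary_mat W" and x: "norm x \<le> C"
    and x_min: "\<And>x'. norm x' \<le> C \<Longrightarrow> fit \<nu> A y P W B x \<le> fit \<nu> A y P W B x'"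
    and thr: "\<And>j. thresholded \<eta> (W *v (P j *v x)) (B $ j)"
    and dB: "\<forall>j i. cmod (dB $ j $ i) < \<eta> / 2"
  shows "gobj \<nu> A y P \<eta> C (W, B, x) \<le> gobj \<nu> A y P \<eta> C (W, B + dB, x + dx)"
proof (cases "norm (x + dx) \<le> C")
  case False
  thus ?thesis by (simp add: gobj_eq)
next
  case True
  let ?r = "\<lambda>j. W *v (P j *v x) - B $ j"
  let ?w = "\<lambda>j. W *v (P j *v dx)"
  have data: "\<nu> * (norm (A *v x - y))\<^sup>2 + 2 * \<nu> * inner (A *v x - y) (A *v dx)
      \<le> \<nu> * (norm (A *v (x + dx) - y))\<^sup>2"
  proof -
    have eq: "A *v (x + dx) - y = (A *v x - y) + A *v dx" by (simp add: matrix_vector_right_distrib)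
    show ?thesis using \<nu> unfolding eq power2_norm_add by (simp add: algebra_simps)
  qed
  have patch: "(norm (?r j))\<^sup>2 + 2 * inner (?r j) (?w j) - 2 * inner (?r j) (dB $ j)
      \<le> (norm (W *v (P j *v (x + dx)) - (B + dB) $ j))\<^sup>2" for j
  proof -
    have eq: "W *v (P j *v (x + dx)) - (B + dB) $ j = ?r j + (?w j - dB $ j)"
      by (simp add: matrix_vector_right_distrib)
    show ?thesis unfolding eq power2_norm_add by (simp add: inner_diff_right)
  qed
  have "(\<Sum>j\<in>UNIV. (norm (?r j))\<^sup>2 + 2 * inner (?r j) (?w j) - 2 * inner (?r j) (dB $ j))
      \<le> (\<Sum>j\<in>UNIV. (norm (W *v (P j *v (x + dx)) - (B + dB) $ j))\<^sup>2)"
    by (rule sum_mono) (rule patch)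
  with data have "fit \<nu> A y P W B x + (2 * \<nu> * inner (A *v x - y) (A *v dx) + (\<Sum>j\<in>UNIV. 2 * inner (?r j) (?w j)))
      - (\<Sum>j\<in>UNIV. 2 * inner (?r j) (dB $ j)) \<le> fit \<nu> A y P W (B + dB) (x + dx)"
    unfolding fit_def
    by (simp add: sum.distrib sum_subtractf)
  moreover have "0 \<le> 2 * \<nu> * inner (A *v x - y) (A *v dx) + (\<Sum>j\<in>UNIV. 2 * inner (?r j) (?w j))"
    by (rule fit_first_order_nonneg[OF x True \<nu> x_min])
  moreover have "\<eta>\<^sup>2 * sparsity B \<le> - (\<Sum>j\<in>UNIV. 2 * inner (?r j) (dB $ j)) + \<eta>\<^sup>2 * sparsity (B + dB)"
  proof -
    have "(\<Sum>j\<in>UNIV. \<eta>\<^sup>2 * real (l0 (B $ j)))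
        \<le> (\<Sum>j\<in>UNIV. - 2 * inner (?r j) (dB $ j) + \<eta>\<^sup>2 * real (l0 (B $ j + dB $ j)))"
      using thr dB by (intro sum_mono thresholded_local_min[OF \<eta>]) auto
    thus ?thesis by (simp add: sparsity_def sum.distrib sum_subtractf sum_distrib_left)
  qed
  ultimately show ?thesis using True x W by (simp add: gobj_eq)
qed

lemma inner_matrix_vector_perturb_le:
  fixes W W' :: "complex^'n^'n" and M :: "complex^'p^'n"
  assumes b': "norm b' \<le> \<beta>"
  shows "inner (W' *v (M *v x')) b' - inner (W *v (M *v x')) b'
    \<le> (inner (W' *v (M *v x)) b - inner (W *v (M *v x)) b)
       + norm (W' - W) * ((norm M * \<beta> + norm (M *v x)) * (norm (x' - x) + norm (b' - b)))"
proof -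
  let ?E = "W' - W" and ?c = "norm M * \<beta> + norm (M *v x)"
  have split: "inner (W' *v (M *v x')) b' - inner (W *v (M *v x')) b'
      = (inner (W' *v (M *v x)) b - inner (W *v (M *v x)) b)
        + inner (?E *v (M *v (x' - x))) b' + inner (?E *v (M *v x)) (b' - b)"
    by (simp add: matrix_vector_mult_diff_rdistrib matrix_vector_mult_diff_distrib
        inner_diff_left inner_diff_right)
  have bound: "inner (?E *v v) c \<le> norm ?E * (norm v * norm c)" for v c
    using norm_cauchy_schwarz[of "?E *v v" c] norm_matrix_vector_mult_le[of ?E v]
    by (simp add: mult.assoc[symmetric]) (meson mult_right_mono norm_ge_zero order_trans)
  have "norm (M *v (x' - x)) * norm b' \<le> (norm M * norm (x' - x)) * \<beta>"
    using b' norm_matrix_vector_mult_le by (intro mult_mono) auto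
  also have "\<dots> = (norm M * \<beta>) * norm (x' - x)" by (simp add: mult_ac)
  also have "\<dots> \<le> ?c * norm (x' - x)" by (intro mult_right_mono) auto
  finally have "norm (M *v (x' - x)) * norm b' \<le> ?c * norm (x' - x)" .
  moreover have "norm (M *v x) * norm (b' - b) \<le> ?c * norm (b' - b)"
    using order_trans[OF norm_ge_zero b'] by (intro mult_right_mono) auto
  ultimately have "norm (M *v (x' - x)) * norm b' + norm (M *v x) * norm (b' - b)
      \<le> ?c * (norm (x' - x) + norm (b' - b))"
    unfolding distrib_left by (rule add_mono)
  from mult_left_mono[OF this norm_ge_zero[of ?E]]
  show ?thesis
    using split bound[of "M *v (x' - x)" b'] bound[of "M *v x" "b' - b"] by (simp add: distrib_left)
qed

text \<open>For unitary \<open>W'\<close> the fit depends on \<open>W'\<close> only through \<open>Re \<langle>W' P\<^sub>j x', b'\<^sub>j\<rangle>\<close>;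
  optimality in \<open>W\<close> controls this at \<open>(B, x)\<close>, and moving to \<open>(B', x')\<close> costs a term bilinear in
  the displacements.\<close>
lemma fit_sparsity_lower_bound_near:
  fixes W :: "complex^'n^'n" and B :: "complex^'n^'N::finite" and x :: "complex^'p"
  assumes \<eta>: "0 < \<eta>" and W: "unitary_mat W" and x: "norm x \<le> C"
    and W_min: "\<And>W'. unitary_mat W' \<Longrightarrow> fit \<nu> A y P W B x \<le> fit \<nu> A y P W' B x"
    and local_min: "\<And>dB dx. \<forall>j i. cmod (dB $ j $ i) < \<eta> / 2 \<Longrightarrow>
        gobj \<nu> A y P \<eta> C (W, B, x) \<le> gobj \<nu> A y P \<eta> C (W, B + dB, x + dx)"
  obtains K where "0 \<le> K"
    and "\<And>W' B' x'. unitary_mat W' \<Longrightarrow> norm x' \<le> C \<Longrightarrow> norm (B' - B) < \<eta> / 2 \<Longrightarrow>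
      fit \<nu> A y P W B x + \<eta>\<^sup>2 * sparsity B - K * (norm (W' - W) * (norm (x' - x) + norm (B' - B)))
        \<le> fit \<nu> A y P W' B' x' + \<eta>\<^sup>2 * sparsity B'"
proof
  define c where "c j = norm (P j) * (norm B + \<eta> / 2) + norm (P j *v x)" for j
  define K where "K = 2 * (\<Sum>j\<in>UNIV. c j)"
  have c_nonneg: "0 \<le> c j" for j
    using \<eta> by (simp add: c_def)
  thus "0 \<le> K" by (simp add: K_def sum_nonneg)
  fix W' :: "complex^'n^'n" and B' :: "complex^'n^'N" and x' :: "complex^'p"
  assume W': "unitary_mat W'" and x': "norm x' \<le> C" and B': "norm (B' - B) < \<eta> / 2"
  let ?I = "\<lambda>V z b. \<Sum>j\<in>UNIV. inner (V *v (P j *v z)) (b $ j)"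
  let ?\<rho> = "norm (x' - x) + norm (B' - B)"
  have "\<forall>j i. cmod ((B' - B) $ j $ i) < \<eta> / 2"
    using B' by (metis Finite_Cartesian_Product.norm_nth_le order_le_less_trans)
  from local_min[OF this, of "x' - x"]
  have local: "fit \<nu> A y P W B x + \<eta>\<^sup>2 * sparsity B \<le> fit \<nu> A y P W B' x' + \<eta>\<^sup>2 * sparsity B'"
    using W x x' by (simp add: gobj_eq)
  have W_opt: "?I W' x B \<le> ?I W x B"
    using W_min[OF W'] unfolding fit_unitary_eq[OF W] fit_unitary_eq[OF W'] by simp
  have per_patch: "inner (W' *v (P j *v x')) (B' $ j) - inner (W *v (P j *v x')) (B' $ j)
      \<le> (inner (W' *v (P j *v x)) (B $ j) - inner (W *v (P j *v x)) (B $ j))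
         + norm (W' - W) * (c j * ?\<rho>)" for j
  proof -
    have "norm (B' $ j) \<le> norm B + \<eta> / 2"
      using Finite_Cartesian_Product.norm_nth_le[of B' j] norm_triangle_sub[of B' B] B' by linarith
    note inner_matrix_vector_perturb_le[OF this, of W' "P j" x' W x "B $ j"]
    moreover have "norm (B' $ j - B $ j) \<le> norm (B' - B)"
      using Finite_Cartesian_Product.norm_nth_le[of "B' - B" j] by simp
    hence "norm (W' - W) * (c j * (norm (x' - x) + norm (B' $ j - B $ j))) \<le> norm (W' - W) * (c j * ?\<rho>)"
      using c_nonneg by (intro mult_left_mono) auto
    ultimately show ?thesis by (simp add: c_def)
  qed
  have "?I W' x' B' - ?I W x' B'
      = (\<Sum>j\<in>UNIV. inner (W' *v (P j *v x')) (B' $ j) - inner (W *v (P j *v x')) (B' $ j))"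
    by (simp add: sum_subtractf)
  also have "\<dots> \<le> (\<Sum>j\<in>UNIV. (inner (W' *v (P j *v x)) (B $ j) - inner (W *v (P j *v x)) (B $ j))
                       + norm (W' - W) * (c j * ?\<rho>))"
    by (rule sum_mono) (rule per_patch)
  also have "\<dots> = (?I W' x B - ?I W x B) + (\<Sum>j\<in>UNIV. c j) * (norm (W' - W) * ?\<rho>)"
    by (simp add: sum.distrib sum_subtractf sum_distrib_right mult_ac)
  finally have "?I W' x' B' - ?I W x' B' \<le> K / 2 * (norm (W' - W) * ?\<rho>)"
    using W_opt by (simp add: K_def)
  moreover have "fit \<nu> A y P W' B' x' = fit \<nu> A y P W B' x' - 2 * (?I W' x' B' - ?I W x' B')"
    unfolding fit_unitary_eq[OF W] fit_unitary_eq[OF W'] by simp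
  ultimately show "fit \<nu> A y P W B x + \<eta>\<^sup>2 * sparsity B - K * (norm (W' - W) * ?\<rho>)
      \<le> fit \<nu> A y P W' B' x' + \<eta>\<^sup>2 * sparsity B'"
    using local by simp
qed

lemma critical_point_if_zero_frechet_subdiff:
  "0 \<in> frechet_subdiff f z \<Longrightarrow> critical_point f z"
  unfolding critical_point_def limiting_subdiff_def frechet_subdiff_def
  by (intro CollectI conjI exI[of _ "\<lambda>_. z"] exI[of _ "\<lambda>_. 0"]) auto

lemma zero_frechet_subdiff_if_quadratic_minorant:
  fixes f :: "'a::real_inner \<Rightarrow> ereal"
  assumes fz: "f z = ereal c"
    and near: "\<forall>\<^sub>F u in at z. ereal (c - K * (norm (u - z))\<^sup>2) \<le> f u"
  shows "0 \<in> frechet_subdiff f z"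
proof -
  let ?R = "\<lambda>u. (f u - f z - ereal (inner 0 (u - z))) / ereal (norm (u - z))"
  have "\<forall>\<^sub>F u in at z. - ereal e \<le> ?R u" if e: "0 < e" for e
  proof -
    obtain d where d: "0 < d" and bound: "\<And>u. u \<noteq> z \<Longrightarrow> dist u z < d \<Longrightarrow>
        ereal (c - K * (norm (u - z))\<^sup>2) \<le> f u"
      using near unfolding eventually_at by auto
    show ?thesis
      unfolding eventually_at
    proof (intro exI[of _ "min d (e / (\<bar>K\<bar> + 1))"] conjI ballI impI)
      show "0 < min d (e / (\<bar>K\<bar> + 1))" using d e by simp
      fix u assume u: "u \<noteq> z \<and> dist u z < min d (e / (\<bar>K\<bar> + 1))"
      define n where "n = norm (u - z)"
      have n: "0 < n" "n < d" "n * (\<bar>K\<bar> + 1) < e"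
        using u by (auto simp: n_def dist_norm pos_less_divide_eq)
      show "- ereal e \<le> ?R u"
      proof (cases "f u")
        case (real g)
        have "c - K * n\<^sup>2 \<le> g" using bound[of u] u n real by (simp add: n_def dist_norm)
        hence "- K * n \<le> (g - c) / n" using n by (simp add: field_simps power2_eq_square)
        moreover have "K * n \<le> \<bar>K\<bar> * n" "\<bar>K\<bar> * n + n < e"
          using n(1,3) by (simp_all add: mult_right_mono algebra_simps)
        hence "- e \<le> - K * n" using n(1) by linarith
        ultimately show ?thesis using real fz n by (simp add: n_def)
      qed (use bound[of u] u n fz in \<open>auto simp: n_def dist_norm\<close>)
    qed
  qed
  hence "- ereal e \<le> Liminf (at z) ?R" if "0 < e" for e
    using that by (intro Liminf_bounded) blast
  hence "0 \<le> Liminf (at z) ?R + ereal e" if "0 < e" for e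
    using that by (cases "Liminf (at z) ?R") fastforce+
  hence "0 \<le> Liminf (at z) ?R"
    by (rule ereal_le_epsilon2)
  thus ?thesis unfolding frechet_subdiff_def using fz by simp
qed

lemma critical_point_gobj:
  fixes W :: "complex^'n^'n" and B :: "complex^'n^'N::finite" and x :: "complex^'p"
  assumes \<eta>: "0 < \<eta>" and W: "unitary_mat W" and x: "norm x \<le> C"
    and W_min: "\<And>W'. unitary_mat W' \<Longrightarrow> fit \<nu> A y P W B x \<le> fit \<nu> A y P W' B x"
    and local_min: "\<And>dB dx. \<forall>j i. cmod (dB $ j $ i) < \<eta> / 2 \<Longrightarrow>
        gobj \<nu> A y P \<eta> C (W, B, x) \<le> gobj \<nu> A y P \<eta> C (W, B + dB, x + dx)"
  shows "critical_point (gobj \<nu> A y P \<eta> C) (W, B, x)"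
proof -
  obtain K where "0 \<le> K" and K: "\<And>W' B' x'. unitary_mat W' \<Longrightarrow> norm x' \<le> C \<Longrightarrow> norm (B' - B) < \<eta> / 2 \<Longrightarrow>
      fit \<nu> A y P W B x + \<eta>\<^sup>2 * sparsity B - K * (norm (W' - W) * (norm (x' - x) + norm (B' - B)))
        \<le> fit \<nu> A y P W' B' x' + \<eta>\<^sup>2 * sparsity B'"
    using fit_sparsity_lower_bound_near[OF \<eta> W x W_min local_min] by blast
  let ?c = "fit \<nu> A y P W B x + \<eta>\<^sup>2 * sparsity B"
  show ?thesis
  proof (intro critical_point_if_zero_frechet_subdiff zero_frechet_subdiff_if_quadratic_minorant)
    show "gobj \<nu> A y P \<eta> C (W, B, x) = ereal ?c" using W x by (simp add: gobj_eq)
    show "\<forall>\<^sub>F u in at (W, B, x). ereal (?c - 2 * K * (norm (u - (W, B, x)))\<^sup>2) \<le> gobj \<nu> A y P \<eta> C u"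
      unfolding eventually_at
    proof (intro exI[of _ "\<eta> / 2"] conjI ballI impI)
      fix u :: "(complex^'n^'n) \<times> (complex^'n^'N) \<times> (complex^'p)"
      assume u: "u \<noteq> (W, B, x) \<and> dist u (W, B, x) < \<eta> / 2"
      obtain W' B' x' where u_eq: "u = (W', B', x')" by (cases u) auto
      define n where "n = norm (u - (W, B, x))"
      have "norm (B' - B, x' - x) \<le> n"
        using norm_snd_le[of "(B' - B, x' - x)" "W' - W"] by (simp add: n_def u_eq)
      hence "norm (W' - W) \<le> n" "norm (B' - B) \<le> n" "norm (x' - x) \<le> n"
        using norm_fst_le[of "W' - W" "(B' - B, x' - x)"]
          norm_fst_le[of "B' - B" "x' - x"] norm_snd_le[of "x' - x" "B' - B"]
        by (simp_all add: n_def u_eq)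
      hence "K * (norm (W' - W) * (norm (x' - x) + norm (B' - B))) \<le> K * (n * (n + n))"
        using \<open>0 \<le> K\<close> by (intro mult_left_mono mult_mono add_mono) (auto simp: n_def)
      moreover have "norm (B' - B) < \<eta> / 2"
        using \<open>norm (B' - B) \<le> n\<close> u by (simp add: n_def dist_norm)
      ultimately show "ereal (?c - 2 * K * (norm (u - (W, B, x)))\<^sup>2) \<le> gobj \<nu> A y P \<eta> C u"
        using K[of W' x' B'] by (auto simp: u_eq gobj_eq n_def power2_eq_square algebra_simps)
    qed (use \<eta> in simp)
  qed
qed

lemma good_point_if_block_optimal:
  fixes W :: "complex^'n^'n" and B :: "complex^'n^'N::finite" and x :: "complex^'p"
  assumes \<eta>: "0 < \<eta>" and \<nu>: "0 \<le> \<nu>" and W: "unitary_mat W" and x: "norm x \<le> C"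
    and x_min: "\<And>x'. norm x' \<le> C \<Longrightarrow> fit \<nu> A y P W B x \<le> fit \<nu> A y P W B x'"
    and W_min: "\<And>W'. unitary_mat W' \<Longrightarrow> fit \<nu> A y P W B x \<le> fit \<nu> A y P W' B x"
    and thr: "\<And>j. thresholded \<eta> (W *v (P j *v x)) (B $ j)"
  shows "good_point \<nu> A y P \<eta> C (W, B, x)"
proof -
  have local_min: "gobj \<nu> A y P \<eta> C (W, B, x) \<le> gobj \<nu> A y P \<eta> C (W, B + dB, x + dx)"
    if "\<forall>j i. cmod (dB $ j $ i) < \<eta> / 2" for dB dx
    using gobj_local_min_B_x[OF \<eta> \<nu> W x x_min thr that] .
  have B_min: "gobj \<nu> A y P \<eta> C (W, B, x) \<le> gobj \<nu> A y P \<eta> C (W, B', x)" for B'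
  proof -
    have "(\<Sum>j\<in>UNIV. (norm (W *v (P j *v x) - B $ j))\<^sup>2 + \<eta>\<^sup>2 * real (l0 (B $ j)))
       \<le> (\<Sum>j\<in>UNIV. (norm (W *v (P j *v x) - B' $ j))\<^sup>2 + \<eta>\<^sup>2 * real (l0 (B' $ j)))"
      by (intro sum_mono thresholded_min[OF \<eta> thr])
    thus ?thesis using W x by (simp add: gobj_def)
  qed
  show ?thesis
    unfolding good_point_def
    using critical_point_gobj[OF \<eta> W x W_min local_min] local_min B_min x_min W_min W x
    by (auto simp: gobj_eq)
qed

lemma tendsto_matrix_vector_mult:
  fixes M :: "'a \<Rightarrow> complex^'c^'r"
  assumes "(M \<longlongrightarrow> M0) F" "(v \<longlongrightarrow> v0) F"
  shows "((\<lambda>k. M k *v v k) \<longlongrightarrow> M0 *v v0) F"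
  unfolding matrix_vector_mult_def
  by (intro tendsto_vec_lambda tendsto_sum tendsto_mult tendsto_vec_nth assms)

lemma tendsto_matrix_mult:
  fixes M :: "'a \<Rightarrow> complex^'c^'r" and N :: "'a \<Rightarrow> complex^'d^'c"
  assumes "(M \<longlongrightarrow> M0) F" "(N \<longlongrightarrow> N0) F"
  shows "((\<lambda>k. M k ** N k) \<longlongrightarrow> M0 ** N0) F"
  unfolding matrix_matrix_mult_def
  by (intro tendsto_vec_lambda tendsto_sum tendsto_mult tendsto_vec_nth assms)

lemma tendsto_ctrans:
  assumes "(M \<longlongrightarrow> M0) F"
  shows "((\<lambda>k. ctrans (M k)) \<longlongrightarrow> ctrans M0) F"
  unfolding ctrans_def by (intro tendsto_vec_lambda tendsto_cnj tendsto_vec_nth assms)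

lemma unitary_mat_limit:
  assumes "W \<longlonglongrightarrow> W0" and "\<And>k. unitary_mat (W k)"
  shows "unitary_mat W0"
proof -
  have "(\<lambda>k. ctrans (W k) ** W k) \<longlonglongrightarrow> ctrans W0 ** W0"
    by (intro tendsto_matrix_mult tendsto_ctrans assms(1))
  moreover have "(\<lambda>k. ctrans (W k) ** W k) = (\<lambda>k. mat 1)"
    using assms(2) by (simp add: unitary_mat_def)
  ultimately show ?thesis
    unfolding unitary_mat_def using LIMSEQ_unique tendsto_const by metis
qed

lemma tendsto_fit:
  assumes "(W \<longlongrightarrow> W0) F" "(B \<longlongrightarrow> B0) F" "(x \<longlongrightarrow> x0) F"
  shows "((\<lambda>k. fit \<nu> A y P (W k) (B k) (x k)) \<longlongrightarrow> fit \<nu> A y P W0 B0 x0) F"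
  unfolding fit_def
  by (intro tendsto_intros tendsto_matrix_vector_mult assms tendsto_const tendsto_vec_nth)

lemma hard_threshold_scalar_limit:
  fixes a b :: "nat \<Rightarrow> complex"
  assumes a: "a \<longlonglongrightarrow> a0" and b: "b \<longlonglongrightarrow> b0" and \<eta>: "0 < \<eta>"
    and thr: "\<And>k. b k = (if cmod (a k) < \<eta> then 0 else a k)"
  shows "(b0 = 0 \<and> cmod a0 \<le> \<eta>) \<or> (b0 = a0 \<and> \<eta> \<le> cmod a0)"
proof (cases "b0 = 0")
  case True
  show ?thesis
  proof (rule ccontr)
    assume "\<not> ?thesis"
    hence gt: "\<eta> < cmod a0" using True by auto
    have "\<forall>\<^sub>F k in sequentially. \<eta> < cmod (a k)"
      using order_tendstoD(1)[OF tendsto_norm[OF a] gt] .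
    hence "\<forall>\<^sub>F k in sequentially. a k = b k"
      by eventually_elim (simp add: thr)
    hence "b \<longlonglongrightarrow> a0" by (rule Lim_transform_eventually[OF a])
    thus False using b True gt \<eta> LIMSEQ_unique by fastforce
  qed
next
  case False
  have "\<forall>\<^sub>F k in sequentially. b k \<noteq> 0"
    using b False by (rule tendsto_imp_eventually_ne)
  hence kept: "\<forall>\<^sub>F k in sequentially. b k = a k \<and> \<eta> \<le> cmod (a k)"
    by eventually_elim (auto simp: thr split: if_splits)
  hence "a \<longlonglongrightarrow> b0"
    by (intro Lim_transform_eventually[OF b]) (auto elim: eventually_mono)
  hence "b0 = a0" using a LIMSEQ_unique by blast
  moreover have "\<eta> \<le> cmod a0"
    using kept by (intro tendsto_lowerbound[OF tendsto_norm[OF a]]) (auto elim: eventually_mono)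
  ultimately show ?thesis by simp
qed

lemma thresholded_limit:
  fixes a :: "nat \<Rightarrow> complex^'n"
  assumes "a \<longlonglongrightarrow> a0" and "b \<longlonglongrightarrow> b0" and "0 < \<eta>"
    and "\<And>k. b k = hthr \<eta> (a k)"
  shows "thresholded \<eta> a0 b0"
  unfolding thresholded_def
proof
  fix i
  show "(b0 $ i = 0 \<and> cmod (a0 $ i) \<le> \<eta>) \<or> (b0 $ i = a0 $ i \<and> \<eta> \<le> cmod (a0 $ i))"
    by (rule hard_threshold_scalar_limit[OF tendsto_vec_nth[OF assms(1)] tendsto_vec_nth[OF assms(2)]
          assms(3)]) (simp add: assms(4) hthr_def)
qed

text \<open>Entries that are \<open>0\<close> or of modulus at least \<open>\<eta>\<close> cannot converge across the gap, so
  the support of a convergent sequence of thresholded vectors is eventually constant.\<close>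
lemma l0_eventually_eq:
  fixes b :: "nat \<Rightarrow> complex^'n"
  assumes b: "b \<longlonglongrightarrow> b0" and \<eta>: "0 < \<eta>"
    and gap: "\<And>k i. b k $ i = 0 \<or> \<eta> \<le> cmod (b k $ i)"
  shows "\<forall>\<^sub>F k in sequentially. l0 (b k) = l0 b0"
proof -
  have "\<forall>\<^sub>F k in sequentially. (b k $ i \<noteq> 0) = (b0 $ i \<noteq> 0)" for i
  proof (cases "b0 $ i = 0")
    case True
    have "\<forall>\<^sub>F k in sequentially. cmod (b k $ i) < \<eta>"
      using True \<eta> by (intro order_tendstoD(2)[OF tendsto_norm[OF tendsto_vec_nth[OF b]]]) auto
    thus ?thesis by eventually_elim (use gap True in \<open>metis not_le\<close>)
  next
    case False
    have "\<forall>\<^sub>F k in sequentially. b k $ i \<noteq> 0"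
      using tendsto_vec_nth[OF b] False by (rule tendsto_imp_eventually_ne)
    thus ?thesis by eventually_elim (use False in auto)
  qed
  hence "\<forall>\<^sub>F k in sequentially. \<forall>i. (b k $ i \<noteq> 0) = (b0 $ i \<noteq> 0)"
    by (rule eventually_all_finite)
  thus ?thesis by eventually_elim (simp add: l0_def)
qed

lemma sparsity_eventually_eq:
  fixes B :: "nat \<Rightarrow> complex^'n^'N::finite"
  assumes "B \<longlonglongrightarrow> B0" and "0 < \<eta>"
    and "\<And>k j i. B k $ j $ i = 0 \<or> \<eta> \<le> cmod (B k $ j $ i)"
  shows "\<forall>\<^sub>F k in sequentially. sparsity (B k) = sparsity B0"
proof -
  have "\<forall>\<^sub>F k in sequentially. l0 (B k $ j) = l0 (B0 $ j)" for j
    using assms by (intro l0_eventually_eq tendsto_vec_nth) auto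
  hence "\<forall>\<^sub>F k in sequentially. \<forall>j. l0 (B k $ j) = l0 (B0 $ j)"
    by (rule eventually_all_finite)
  thus ?thesis by eventually_elim (simp add: sparsity_def)
qed

lemma infdist_tendsto_0_if_limit_points_in:
  fixes z :: "nat \<Rightarrow> 'a::heine_borel"
  assumes bounded: "bounded (range z)"
    and limits: "\<And>r l. strict_mono r \<Longrightarrow> (\<lambda>k. z (r k)) \<longlonglongrightarrow> l \<Longrightarrow> l \<in> S"
  shows "S \<noteq> {}" and "(\<lambda>t. infdist (z t) S) \<longlonglongrightarrow> 0"
proof -
  obtain l r where "strict_mono r" "(z \<circ> r) \<longlonglongrightarrow> l"
    using bounded_imp_convergent_subsequence[OF bounded] by blast
  thus "S \<noteq> {}" using limits by (auto simp: o_def)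
  show "(\<lambda>t. infdist (z t) S) \<longlonglongrightarrow> 0"
  proof (rule ccontr)
    assume "\<not> ?thesis"
    then obtain e where e: "0 < e" and far: "\<forall>m. \<exists>t\<ge>m. e \<le> infdist (z t) S"
      unfolding LIMSEQ_iff using infdist_nonneg by (metis abs_of_nonneg diff_zero not_le real_norm_def)
    define T where "T = {t. e \<le> infdist (z t) S}"
    have T: "infinite T"
      using far unfolding T_def infinite_nat_iff_unbounded_le by blast
    have "bounded (range (z \<circ> enumerate T))"
      by (rule bounded_subset[OF bounded]) auto
    then obtain l s where s: "strict_mono s" and lim: "(z \<circ> enumerate T \<circ> s) \<longlonglongrightarrow> l"
      using bounded_imp_convergent_subsequence by blast
    have "l \<in> S"
      using lim strict_mono_o[OF strict_mono_enumerate[OF T] s] by (intro limits) (auto simp: o_def)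
    obtain k where "dist (z (enumerate T (s k))) l < e"
      using tendstoD[OF lim e] by (auto simp: eventually_sequentially)
    moreover have "infdist (z (enumerate T (s k))) S \<le> dist (z (enumerate T (s k))) l"
      by (rule infdist_le[OF \<open>l \<in> S\<close>])
    moreover have "enumerate T (s k) \<in> T" by (rule enumerate_in_set[OF T])
    ultimately show False by (simp add: T_def)
  qed
qed

locale A1_run =
  fixes \<nu> :: real and A :: "complex^'p^'m" and y :: "complex^'m"
    and P :: "'N::finite \<Rightarrow> complex^'p^'n" and \<eta> C :: real
    and Wt :: "nat \<Rightarrow> complex^'n^'n" and Bt :: "nat \<Rightarrow> complex^'n^'N" and xt :: "nat \<Rightarrow> complex^'p"
  assumes nu_nonneg: "0 \<le> \<nu>" and eta_pos: "0 < \<eta>"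
    and iterates: "A1_iterates \<nu> A y P \<eta> C Wt Bt xt"
begin

abbreviation energy :: "complex^'n^'n \<Rightarrow> complex^'n^'N \<Rightarrow> complex^'p \<Rightarrow> real" where
  "energy W B x \<equiv> fit \<nu> A y P W B x + \<eta>\<^sup>2 * sparsity B"

lemma iterate_step:
  assumes "1 \<le> t"
  shows "\<exists>U V \<sigma>. unitary_mat U \<and> unitary_mat V \<and> (\<forall>i. 0 \<le> \<sigma> i) \<and>
         (\<chi> i k. \<Sum>j\<in>UNIV. (P j *v xt (t - 1)) $ i * cnj (Bt (t - 1) $ j $ k))
            = U ** diag_mat \<sigma> ** ctrans V \<and> Wt t = V ** ctrans U"
    and B_update: "Bt t $ j = hthr \<eta> (Wt t *v (P j *v xt (t - 1)))"
    and x_norm_le: "norm (xt t) \<le> C"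
    and x_update_min: "norm x' \<le> C \<Longrightarrow> fit \<nu> A y P (Wt t) (Bt t) (xt t) \<le> fit \<nu> A y P (Wt t) (Bt t) x'"
proof -
  note step = iterates[unfolded A1_iterates_def, rule_format, OF assms]
  show "\<exists>U V \<sigma>. unitary_mat U \<and> unitary_mat V \<and> (\<forall>i. 0 \<le> \<sigma> i) \<and>
         (\<chi> i k. \<Sum>j\<in>UNIV. (P j *v xt (t - 1)) $ i * cnj (Bt (t - 1) $ j $ k))
            = U ** diag_mat \<sigma> ** ctrans V \<and> Wt t = V ** ctrans U"
    using step by (rule conjunct1)
  show "Bt t $ j = hthr \<eta> (Wt t *v (P j *v xt (t - 1)))"
    using step[THEN conjunct2, THEN conjunct1] by (rule spec)
  show "norm (xt t) \<le> C"
    using step by (elim conjE)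
  show "norm x' \<le> C \<Longrightarrow> fit \<nu> A y P (Wt t) (Bt t) (xt t) \<le> fit \<nu> A y P (Wt t) (Bt t) x'"
    using step[THEN conjunct2, THEN conjunct2, THEN conjunct2] unfolding fit_def by (elim allE impE)
qed

lemma W_unitary:
  assumes "1 \<le> t"
  shows "unitary_mat (Wt t)"
proof -
  obtain U V where "unitary_mat U" "unitary_mat V" "Wt t = V ** ctrans U"
    using iterate_step(1)[OF assms] by blast
  thus ?thesis by (simp add: unitary_mat_mult unitary_mat_ctrans)
qed

lemma W_update_min:
  assumes "1 \<le> t" "unitary_mat W'"
  shows "fit \<nu> A y P (Wt t) (Bt (t - 1)) (xt (t - 1)) \<le> fit \<nu> A y P W' (Bt (t - 1)) (xt (t - 1))"
proof -
  obtain U V \<sigma> where svd: "unitary_mat U" "unitary_mat V" "\<forall>i. 0 \<le> \<sigma> i"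
    "(\<chi> i k. \<Sum>j\<in>UNIV. (P j *v xt (t - 1)) $ i * cnj (Bt (t - 1) $ j $ k)) = U ** diag_mat \<sigma> ** ctrans V"
    and W_eq: "Wt t = V ** ctrans U"
    using iterate_step(1)[OF assms(1)] by blast
  show ?thesis
    unfolding W_eq using fit_procrustes_le[OF svd(4,1,2,3) assms(2)] .
qed

lemma B_entry_gap: "1 \<le> t \<Longrightarrow> Bt t $ j $ i = 0 \<or> \<eta> \<le> cmod (Bt t $ j $ i)"
  using B_update[of t j] hthr_nth_cases by metis

definition iterate_energy :: "nat \<Rightarrow> real" where
  "iterate_energy t = energy (Wt t) (Bt t) (xt t)"

definition x_gap :: "nat \<Rightarrow> real" where
  "x_gap t = (\<Sum>j\<in>UNIV. (norm (P j *v (xt t - xt (Suc t))))\<^sup>2)"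

lemma x_gap_nonneg: "0 \<le> x_gap t"
  by (simp add: x_gap_def sum_nonneg)

lemma iterate_energy_nonneg: "0 \<le> iterate_energy t"
  by (simp add: iterate_energy_def fit_nonneg[OF nu_nonneg] sparsity_nonneg)

lemma energy_descent:
  assumes t: "1 \<le> t"
  shows "iterate_energy (Suc t) + x_gap t \<le> energy (Wt (Suc t)) (Bt t) (xt t)"
    and "energy (Wt (Suc t)) (Bt t) (xt t) \<le> iterate_energy t"
proof -
  have "fit \<nu> A y P (Wt (Suc t)) (Bt (Suc t)) (xt (Suc t)) + x_gap t
      \<le> fit \<nu> A y P (Wt (Suc t)) (Bt (Suc t)) (xt t)"
    unfolding x_gap_def using t
    by (intro fit_sufficient_decrease[OF W_unitary x_norm_le x_norm_le nu_nonneg x_update_min]) auto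
  moreover have "energy (Wt (Suc t)) (Bt (Suc t)) (xt t) \<le> energy (Wt (Suc t)) (Bt t) (xt t)"
  proof -
    have "(\<Sum>j\<in>UNIV. (norm (Wt (Suc t) *v (P j *v xt t) - Bt (Suc t) $ j))\<^sup>2 + \<eta>\<^sup>2 * real (l0 (Bt (Suc t) $ j)))
       \<le> (\<Sum>j\<in>UNIV. (norm (Wt (Suc t) *v (P j *v xt t) - Bt t $ j))\<^sup>2 + \<eta>\<^sup>2 * real (l0 (Bt t $ j)))"
      by (intro sum_mono thresholded_min[OF eta_pos]) (simp add: B_update thresholded_hthr)
    thus ?thesis by (simp add: fit_def sparsity_def sum.distrib sum_distrib_left add.assoc)
  qed
  ultimately show "iterate_energy (Suc t) + x_gap t \<le> energy (Wt (Suc t)) (Bt t) (xt t)"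
    by (simp add: iterate_energy_def)
  show "energy (Wt (Suc t)) (Bt t) (xt t) \<le> iterate_energy t"
    using W_update_min[of "Suc t" "Wt t"] W_unitary[OF t] by (simp add: iterate_energy_def)
qed

lemma iterate_energy_Suc_le: "1 \<le> t \<Longrightarrow> iterate_energy (Suc t) + x_gap t \<le> iterate_energy t"
  using energy_descent by (meson order_trans)

definition energy_limit :: real where
  "energy_limit = lim iterate_energy"

lemma iterate_energy_tendsto: "iterate_energy \<longlonglongrightarrow> energy_limit"
proof -
  have "decseq (\<lambda>t. iterate_energy (Suc t))"
  proof (rule decseq_SucI)
    show "iterate_energy (Suc (Suc t)) \<le> iterate_energy (Suc t)" for t
      using iterate_energy_Suc_le[of "Suc t"] x_gap_nonneg[of "Suc t"] by simp
  qed
  then obtain L where "(\<lambda>t. iterate_energy (Suc t)) \<longlonglongrightarrow> L"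
    using decseq_convergent[of _ 0] iterate_energy_nonneg by blast
  hence "iterate_energy \<longlonglongrightarrow> L" by (rule LIMSEQ_offset[where k = 1, simplified])
  thus ?thesis unfolding energy_limit_def by (simp add: limI)
qed

lemma x_gap_tendsto: "x_gap \<longlonglongrightarrow> 0"
proof -
  have "(\<lambda>t. x_gap (Suc t)) \<longlonglongrightarrow> 0"
  proof (rule real_tendsto_sandwich[OF _ _ tendsto_const])
    show "\<forall>\<^sub>F t in sequentially. 0 \<le> x_gap (Suc t)"
      by (simp add: x_gap_nonneg)
    show "\<forall>\<^sub>F t in sequentially. x_gap (Suc t) \<le> iterate_energy (Suc t) - iterate_energy (Suc (Suc t))"
      using iterate_energy_Suc_le by (intro always_eventually allI) (simp add: algebra_simps)
    have "(\<lambda>t. iterate_energy (Suc t) - iterate_energy (Suc (Suc t))) \<longlonglongrightarrow> energy_limit - energy_limit"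
      by (intro tendsto_diff LIMSEQ_Suc iterate_energy_tendsto)
    thus "(\<lambda>t. iterate_energy (Suc t) - iterate_energy (Suc (Suc t))) \<longlonglongrightarrow> 0" by simp
  qed
  thus ?thesis by (rule LIMSEQ_offset[where k = 1, simplified])
qed

lemma patch_increment_tendsto: "(\<lambda>t. P j *v (xt t - xt (Suc t))) \<longlonglongrightarrow> 0"
proof -
  have "(\<lambda>t. (norm (P j *v (xt t - xt (Suc t))))\<^sup>2) \<longlonglongrightarrow> 0"
    by (rule real_tendsto_sandwich[OF _ _ tendsto_const x_gap_tendsto])
       (auto intro!: always_eventually member_le_sum simp: x_gap_def)
  from tendsto_real_sqrt[OF this] show ?thesis
    by (simp add: tendsto_norm_zero_iff)
qed

lemma W_update_energy_tendsto: "(\<lambda>t. energy (Wt (Suc t)) (Bt t) (xt t)) \<longlonglongrightarrow> energy_limit"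
proof (rule real_tendsto_sandwich[OF _ _ LIMSEQ_Suc[OF iterate_energy_tendsto] iterate_energy_tendsto])
  show "\<forall>\<^sub>F t in sequentially. iterate_energy (Suc t) \<le> energy (Wt (Suc t)) (Bt t) (xt t)"
  proof (rule eventually_sequentiallyI[of 1])
    show "iterate_energy (Suc t) \<le> energy (Wt (Suc t)) (Bt t) (xt t)" if "1 \<le> t" for t
      using energy_descent(1)[OF that] x_gap_nonneg[of t] by linarith
  qed
  show "\<forall>\<^sub>F t in sequentially. energy (Wt (Suc t)) (Bt t) (xt t) \<le> iterate_energy t"
    by (rule eventually_sequentiallyI[of 1]) (rule energy_descent(2))
qed

lemma energy_tendsto_along:
  assumes "W \<longlonglongrightarrow> W0" "(\<lambda>k. Bt (r k)) \<longlonglongrightarrow> B0" "x \<longlonglongrightarrow> x0" "\<And>k. 1 \<le> r k"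
  shows "(\<lambda>k. energy (W k) (Bt (r k)) (x k)) \<longlonglongrightarrow> energy W0 B0 x0"
proof -
  have "\<forall>\<^sub>F k in sequentially. sparsity (Bt (r k)) = sparsity B0"
    using assms(2,4) eta_pos B_entry_gap by (intro sparsity_eventually_eq) auto
  hence "\<forall>\<^sub>F k in sequentially.
      fit \<nu> A y P (W k) (Bt (r k)) (x k) + \<eta>\<^sup>2 * sparsity B0 = energy (W k) (Bt (r k)) (x k)"
    by eventually_elim simp
  with tendsto_add[OF tendsto_fit[OF assms(1-3)] tendsto_const] show ?thesis
    by (rule Lim_transform_eventually)
qed

context
  fixes r :: "nat \<Rightarrow> nat" and W0 :: "complex^'n^'n" and B0 :: "complex^'n^'N" and x0 :: "complex^'p"
  assumes r: "strict_mono r" and r_pos: "\<And>k. 1 \<le> r k"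
    and lim_W: "(\<lambda>k. Wt (r k)) \<longlonglongrightarrow> W0"
    and lim_B: "(\<lambda>k. Bt (r k)) \<longlonglongrightarrow> B0"
    and lim_x: "(\<lambda>k. xt (r k)) \<longlonglongrightarrow> x0"
begin

lemma limit_point_unitary: "unitary_mat W0"
  using lim_W by (rule unitary_mat_limit) (rule W_unitary[OF r_pos])

lemma limit_point_x_norm_le: "norm x0 \<le> C"
  using tendsto_norm[OF lim_x] by (rule LIMSEQ_le_const2) (use x_norm_le r_pos in blast)

lemma limit_point_thresholded: "thresholded \<eta> (W0 *v (P j *v x0)) (B0 $ j)"
proof (rule thresholded_limit[OF _ tendsto_vec_nth[OF lim_B] eta_pos])
  have "strict_mono (\<lambda>k. r k - 1)"
    using r r_pos by (simp add: strict_mono_def diff_less_mono)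
  from LIMSEQ_subseq_LIMSEQ[OF patch_increment_tendsto this]
  have "(\<lambda>k. P j *v (xt (r k - 1) - xt (Suc (r k - 1)))) \<longlonglongrightarrow> 0"
    by (simp add: o_def)
  moreover have "Suc (r k - 1) = r k" for k
    using r_pos[of k] by simp
  ultimately have "(\<lambda>k. P j *v (xt (r k - 1) - xt (r k))) \<longlonglongrightarrow> 0"
    by simp
  hence "(\<lambda>k. P j *v (xt (r k - 1) - xt (r k)) + P j *v xt (r k)) \<longlonglongrightarrow> 0 + P j *v x0"
    by (intro tendsto_add tendsto_matrix_vector_mult tendsto_const lim_x)
  hence "(\<lambda>k. P j *v xt (r k - 1)) \<longlonglongrightarrow> P j *v x0"
    by (simp add: matrix_vector_mult_diff_distrib)
  thus "(\<lambda>k. Wt (r k) *v (P j *v xt (r k - 1))) \<longlonglongrightarrow> W0 *v (P j *v x0)"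
    by (rule tendsto_matrix_vector_mult[OF lim_W])
  show "Bt (r k) $ j = hthr \<eta> (Wt (r k) *v (P j *v xt (r k - 1)))" for k
    using B_update[OF r_pos] .
qed

lemma limit_point_energy: "energy W0 B0 x0 = energy_limit"
proof -
  have "(\<lambda>k. iterate_energy (r k)) \<longlonglongrightarrow> energy W0 B0 x0"
    unfolding iterate_energy_def by (rule energy_tendsto_along[OF lim_W lim_B lim_x r_pos])
  moreover have "(\<lambda>k. iterate_energy (r k)) \<longlonglongrightarrow> energy_limit"
    using LIMSEQ_subseq_LIMSEQ[OF iterate_energy_tendsto r] by (simp add: o_def)
  ultimately show ?thesis by (rule LIMSEQ_unique)
qed

lemma limit_point_x_min: "norm x' \<le> C \<Longrightarrow> fit \<nu> A y P W0 B0 x0 \<le> fit \<nu> A y P W0 B0 x'"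
  by (rule LIMSEQ_le[OF tendsto_fit[OF lim_W lim_B lim_x] tendsto_fit[OF lim_W lim_B tendsto_const]])
     (use x_update_min r_pos in blast)

text \<open>\<open>W0\<close> is not itself an update, but the updates \<open>Wt (Suc (r k))\<close>, computed from
  \<open>Bt (r k)\<close> and \<open>xt (r k)\<close>, have an optimal limit point \<open>W1\<close> for \<open>(B0, x0)\<close>; as both
  \<open>(W1, B0, x0)\<close> and \<open>(W0, B0, x0)\<close> have the limit energy, \<open>W0\<close> is optimal as well.\<close>
lemma limit_point_W_min:
  assumes W': "unitary_mat W'"
  shows "fit \<nu> A y P W0 B0 x0 \<le> fit \<nu> A y P W' B0 x0"
proof -
  have "bounded (range (\<lambda>k. Wt (Suc (r k))))"
    unfolding bounded_iff by (auto simp: norm_unitary_mat W_unitary)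
  then obtain W1 s where s: "strict_mono s" and lim_W1: "(\<lambda>k. Wt (Suc (r (s k)))) \<longlonglongrightarrow> W1"
    using bounded_imp_convergent_subsequence unfolding o_def by blast
  have lim_B1: "(\<lambda>k. Bt (r (s k))) \<longlonglongrightarrow> B0" and lim_x1: "(\<lambda>k. xt (r (s k))) \<longlonglongrightarrow> x0"
    using LIMSEQ_subseq_LIMSEQ[OF lim_B s] LIMSEQ_subseq_LIMSEQ[OF lim_x s] by (simp_all add: o_def)
  have W1_min: "fit \<nu> A y P W1 B0 x0 \<le> fit \<nu> A y P W' B0 x0"
    by (rule LIMSEQ_le[OF tendsto_fit[OF lim_W1 lim_B1 lim_x1] tendsto_fit[OF tendsto_const lim_B1 lim_x1]])
       (use W_update_min[of "Suc (r (s _))" W'] W' in auto)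
  have "strict_mono (\<lambda>k. r (s k))" using strict_mono_o[OF r s] by (simp add: o_def)
  from LIMSEQ_subseq_LIMSEQ[OF W_update_energy_tendsto this]
  have "(\<lambda>k. energy (Wt (Suc (r (s k)))) (Bt (r (s k))) (xt (r (s k)))) \<longlonglongrightarrow> energy_limit"
    by (simp add: o_def)
  moreover have "(\<lambda>k. energy (Wt (Suc (r (s k)))) (Bt (r (s k))) (xt (r (s k)))) \<longlonglongrightarrow> energy W1 B0 x0"
    using lim_W1 lim_B1 lim_x1 r_pos by (rule energy_tendsto_along)
  ultimately have "energy W1 B0 x0 = energy W0 B0 x0"
    unfolding limit_point_energy by (rule LIMSEQ_unique[rotated])
  thus ?thesis using W1_min by simp
qed

lemma limit_point_good:
  "good_point \<nu> A y P \<eta> C (W0, B0, x0) \<and> gobj \<nu> A y P \<eta> C (W0, B0, x0) = ereal energy_limit"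
  using good_point_if_block_optimal[OF eta_pos nu_nonneg limit_point_unitary limit_point_x_norm_le
      limit_point_x_min limit_point_W_min limit_point_thresholded]
    limit_point_energy limit_point_unitary limit_point_x_norm_le
  by (simp add: gobj_eq)

end

lemma iterates_bounded: "bounded (range (\<lambda>t. (Wt t, Bt t, xt t)))"
proof -
  define R where "R = sqrt (real CARD('n)) + (\<Sum>j\<in>UNIV. norm (P j) * C) + C"
  have "norm (Wt t, Bt t, xt t) \<le> R" if t: "2 \<le> t" for t
  proof -
    have "norm (Bt t $ j) \<le> norm (P j) * C" for j
    proof -
      have "norm (Bt t $ j) \<le> norm (Wt t *v (P j *v xt (t - 1)))"
        using t by (simp add: B_update norm_hthr_le)
      also have "\<dots> = norm (P j *v xt (t - 1))"
        using t by (simp add: norm_unitary_mult W_unitary)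
      also have "\<dots> \<le> norm (P j) * norm (xt (t - 1))" by (rule norm_matrix_vector_mult_le)
      also have "\<dots> \<le> norm (P j) * C" using t by (intro mult_left_mono x_norm_le) auto
      finally show ?thesis .
    qed
    moreover have "norm (Bt t) \<le> (\<Sum>j\<in>UNIV. norm (Bt t $ j))"
      unfolding norm_vec_def by (rule L2_set_le_sum) simp
    ultimately have "norm (Bt t) \<le> (\<Sum>j\<in>UNIV. norm (P j) * C)"
      by (meson order_trans sum_mono)
    moreover have "norm (Wt t, Bt t, xt t) \<le> norm (Wt t) + (norm (Bt t) + norm (xt t))"
      using norm_Pair_le[of "Wt t" "(Bt t, xt t)"] norm_Pair_le[of "Bt t" "xt t"] by simp
    moreover have "norm (Wt t) = sqrt (real CARD('n))" "norm (xt t) \<le> C"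
      using t by (simp_all add: norm_unitary_mat W_unitary x_norm_le)
    ultimately show ?thesis unfolding R_def by linarith
  qed
  hence "bounded ((\<lambda>t. (Wt t, Bt t, xt t)) ` {2..})"
    unfolding bounded_iff by auto
  hence "bounded ((\<lambda>t. (Wt t, Bt t, xt t)) ` {..<2} \<union> (\<lambda>t. (Wt t, Bt t, xt t)) ` {2..})"
    by (simp add: bounded_Un finite_imp_bounded)
  moreover have "{..<2} \<union> {2..} = (UNIV :: nat set)" by auto
  ultimately show ?thesis by (simp only: image_Un[symmetric])
qed

theorem iterates_approach_good_points:
  defines "S \<equiv> {z. good_point \<nu> A y P \<eta> C z \<and> gobj \<nu> A y P \<eta> C z = ereal energy_limit}"
  shows "S \<noteq> {}" and "(\<lambda>t. infdist (Wt t, Bt t, xt t) S) \<longlonglongrightarrow> 0"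
proof -
  have limits: "l \<in> S" if r: "strict_mono r" and lim: "(\<lambda>k. (Wt (r k), Bt (r k), xt (r k))) \<longlonglongrightarrow> l" for r l
  proof -
    obtain W0 B0 x0 where l: "l = (W0, B0, x0)" by (cases l) auto
    \<comment> \<open>The initialization is unconstrained, so drop the first index to stay at \<open>t \<ge> 1\<close>.\<close>
    have r': "strict_mono (\<lambda>k. r (Suc k))" and r'_pos: "1 \<le> r (Suc k)" for k
      using r seq_suble[OF r, of "Suc k"] by (auto simp: strict_mono_def)
    have "(\<lambda>k. (Wt (r (Suc k)), Bt (r (Suc k)), xt (r (Suc k)))) \<longlonglongrightarrow> (W0, B0, x0)"
      using LIMSEQ_Suc[OF lim] l by simp
    from tendsto_fst[OF this] tendsto_fst[OF tendsto_snd[OF this]] tendsto_snd[OF tendsto_snd[OF this]]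
    show ?thesis
      unfolding S_def l using limit_point_good[OF r' r'_pos] by simp
  qed
  show "S \<noteq> {}"
    by (rule infdist_tendsto_0_if_limit_points_in(1)[OF iterates_bounded limits])
  show "(\<lambda>t. infdist (Wt t, Bt t, xt t) S) \<longlonglongrightarrow> 0"
    by (rule infdist_tendsto_0_if_limit_points_in(2)[OF iterates_bounded limits])
qed

end

theorem corollary1:
  fixes A :: "complex^'p^'m" and y :: "complex^'m"
    and P :: "'N::finite \<Rightarrow> complex^'p^'n"
    and \<nu> \<eta> C :: real
    and Wt :: "nat \<Rightarrow> complex^'n^'n" and Bt :: "nat \<Rightarrow> complex^'n^'N" and xt :: "nat \<Rightarrow> complex^'p"
  assumes "\<forall>j i k. P j $ i $ k \<in> {0, 1}"
    and "\<nu> > 0" and "\<eta> > 0" and "C > 0"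
    and "A1_iterates \<nu> A y P \<eta> C Wt Bt xt"
  shows "\<exists>c. {z. good_point \<nu> A y P \<eta> C z \<and> gobj \<nu> A y P \<eta> C z = c} \<noteq> {} \<and>
             (\<lambda>t. infdist (Wt t, Bt t, xt t)
                     {z. good_point \<nu> A y P \<eta> C z \<and> gobj \<nu> A y P \<eta> C z = c}) \<longlonglongrightarrow> 0"
proof -
  interpret A1_run \<nu> A y P \<eta> C Wt Bt xt
    using assms(2,3,5) by unfold_locales auto
  show ?thesis
    by (intro exI[of _ "ereal energy_limit"] conjI iterates_approach_good_points)
qed

end
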